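(* The class $G_{UDG}$ is a strict subclass of the class $G_{LGG}$: every ordered bipartite graph in $G_{UDG}$ belongs to $G_{LGG}$, and there is an ordered bipartite graph in $G_{LGG}$ that is not (up to order-preserving isomorphism) in $G_{UDG}$.
   Context: An ordered bipartite graph is $G=(U,V,E)$ where $U,V$ are disjoint finite sets, each carrying a strict total order, and $E\subseteq U\times V$. A unit distance graph (UDG) on a planar point set $P$ joins two points iff their Euclidean distance is exactly $1$. A locally Gabriel graph (LGG) on $P$ is a geometric graph such that for every edge $(u,v)$ the disk with diameter $\overline{uv}$ contains no neighbour of $u$ or $v$ (other than $u,v$). Construction. Let $G$ be a UDG or LGG on a point set $P$ in convex position, and let $p_1,p_2\in P$ be antipodal (there are parallel lines through $p_1$ and $p_2$ with all of $P$ between them). Draw the line $p_1p_2$ horizontally; let $U=\{u_1,\dots,u_n\}$ be the points of $P$ strictly above it and $V=\{v_1,\dots,v_m\}$ those strictly below, each labelled from right to left. Let $E'$ be the set of edges of $G$ with one endpoint in $U$ and the other in $V$. For an edge $(u,v)\in E'$ with $v\in V$, let $v^{r}$ and $v^{\ell}$ be the points immediately to the right and left of $v$ along the lower boundary of the convex hull (in $V\cup\{p_1,p_2\}$); at least one of $\angle uvv^{r}$, $\angle uvv^{\ell}$ is acute. Put $(u,v)$ in $E_1$ if $\angle uvv^{r}$ is acute, otherwise in $E_2$ (either choice if both are acute). $G_1=(U,V,E_1)$ is ordered by $u_1<\dots<u_n$, $v_1<\dots<v_m$; $G_2=(U,V,E_2)$ carries the reversed orders. $G'_1$ (resp. $G'_2$)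 is obtained from $G_1$ (resp. $G_2$) by deleting, for every $v\in V$, the edge joining $v$ to its neighbour of highest order in $U$ in that graph's ordering. $G_{UDG}$ (resp. $G_{LGG}$) is the class of all ordered bipartite graphs $G'_1,G'_2$ obtained in this way from UDGs (resp. LGGs) on convex point sets. *)

theory Defs
  imports "HOL-Analysis.Analysis"
begin

type_synonym point = "real \<times> real"

text \<open>Ordered bipartite graphs: two vertex sides, each with a strict (total) order,
  and an edge set of pairs (left vertex, right vertex).\<close>
record 'a obgraph =
  lside :: "'a set"
  rside :: "'a set"
  edges :: "('a \<times> 'a) set"
  lord  :: "('a \<times> 'a) set"
  rord  :: "('a \<times> 'a) set"

definition obg_iso :: "'a obgraph \<Rightarrow> 'b obgraph \<Rightarrow> bool" where
  "obg_iso G H \<longleftrightarrow> (\<exists>f g.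
     bij_betw f (lside G) (lside H) \<and> bij_betw g (rside G) (rside H) \<and>
     (\<forall>a\<in>lside G. \<forall>b\<in>lside G. (a, b) \<in> lord G \<longleftrightarrow> (f a, f b) \<in> lord H) \<and>
     (\<forall>a\<in>rside G. \<forall>b\<in>rside G. (a, b) \<in> rord G \<longleftrightarrow> (g a, g b) \<in> rord H) \<and>
     (\<forall>a\<in>lside G. \<forall>b\<in>rside G. (a, b) \<in> edges G \<longleftrightarrow> (f a, g b) \<in> edges H))"

definition cross :: "point \<Rightarrow> point \<Rightarrow> real" where
  "cross a b = fst a * snd b - snd a * fst b"

definition dotp :: "point \<Rightarrow> point \<Rightarrow> real" where
  "dotp a b = fst a * fst b + snd a * snd b"

definition acute :: "point \<Rightarrow> point \<Rightarrow> point \<Rightarrow> bool" where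
  "acute a b c \<longleftrightarrow> dotp (a - b) (c - b) > 0"

definition convex_position :: "point set \<Rightarrow> bool" where
  "convex_position P \<longleftrightarrow> finite P \<and> (\<forall>p\<in>P. p \<notin> convex hull (P - {p}))"

definition geom_graph :: "point set \<Rightarrow> (point \<times> point) set \<Rightarrow> bool" where
  "geom_graph P E \<longleftrightarrow> E \<subseteq> P \<times> P \<and> sym E \<and> (\<forall>p. (p, p) \<notin> E)"

definition is_UDG :: "point set \<Rightarrow> (point \<times> point) set \<Rightarrow> bool" where
  "is_UDG P E \<longleftrightarrow> E = {(p, q). p \<in> P \<and> q \<in> P \<and> dist p q = 1}"

definition is_LGG :: "point set \<Rightarrow> (point \<times> point) set \<Rightarrow> bool" where
  "is_LGG P E \<longleftrightarrow> geom_graph P E \<and>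
     (\<forall>u v w. (u, v) \<in> E \<longrightarrow> ((u, w) \<in> E \<or> (v, w) \<in> E) \<longrightarrow> w \<noteq> u \<longrightarrow> w \<noteq> v \<longrightarrow>
        w \<notin> cball (midpoint u v) (dist u v / 2))"

text \<open>p1, p2 antipodal in P: parallel lines through p1 and p2 with all of P between them.\<close>
definition antipodal :: "point set \<Rightarrow> point \<Rightarrow> point \<Rightarrow> bool" where
  "antipodal P p1 p2 \<longleftrightarrow> p1 \<in> P \<and> p2 \<in> P \<and> p1 \<noteq> p2 \<and>
     (\<exists>n. n \<noteq> 0 \<and> (\<forall>q\<in>P. dotp n p1 \<le> dotp n q \<and> dotp n q \<le> dotp n p2))"

text \<open>Line p1p2 drawn horizontally with p2 on the right (direction p2 - p1);
  U = points strictly above, V = points strictly below.\<close>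
definition upperS :: "point set \<Rightarrow> point \<Rightarrow> point \<Rightarrow> point set" where
  "upperS P p1 p2 = {q \<in> P. cross (p2 - p1) (q - p1) > 0}"

definition lowerS :: "point set \<Rightarrow> point \<Rightarrow> point \<Rightarrow> point set" where
  "lowerS P p1 p2 = {q \<in> P. cross (p2 - p1) (q - p1) < 0}"

text \<open>Labelling from right to left along the hull boundary:
  u < u' iff u comes before u' (u_1 is next to p2), i.e. seen from p1, u' is
  counterclockwise of u (upper side) / clockwise of u (lower side).\<close>
definition ordU :: "point set \<Rightarrow> point \<Rightarrow> point \<Rightarrow> (point \<times> point) set" where
  "ordU P p1 p2 = {(u, u'). u \<in> upperS P p1 p2 \<and> u' \<in> upperS P p1 p2 \<and> cross (u - p1) (u' - p1) > 0}"

definition ordV :: "point set \<Rightarrow> point \<Rightarrow> point \<Rightarrow> (point \<times> point) set" where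
  "ordV P p1 p2 = {(v, v'). v \<in> lowerS P p1 p2 \<and> v' \<in> lowerS P p1 p2 \<and> cross (v - p1) (v' - p1) < 0}"

text \<open>w is the point immediately to the right (resp. left) of v along the lower
  boundary of the convex hull of V \<union> {p1, p2}, i.e. along p2, v_1, ..., v_m, p1.\<close>
definition right_nb :: "point set \<Rightarrow> point \<Rightarrow> point \<Rightarrow> point \<Rightarrow> point \<Rightarrow> bool" where
  "right_nb P p1 p2 v w \<longleftrightarrow>
     (w \<in> lowerS P p1 p2 \<and> (w, v) \<in> ordV P p1 p2 \<and>
        \<not> (\<exists>x. (w, x) \<in> ordV P p1 p2 \<and> (x, v) \<in> ordV P p1 p2))
   \<or> (w = p2 \<and> \<not> (\<exists>x. (x, v) \<in> ordV P p1 p2))"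

definition left_nb :: "point set \<Rightarrow> point \<Rightarrow> point \<Rightarrow> point \<Rightarrow> point \<Rightarrow> bool" where
  "left_nb P p1 p2 v w \<longleftrightarrow>
     (w \<in> lowerS P p1 p2 \<and> (v, w) \<in> ordV P p1 p2 \<and>
        \<not> (\<exists>x. (v, x) \<in> ordV P p1 p2 \<and> (x, w) \<in> ordV P p1 p2))
   \<or> (w = p1 \<and> \<not> (\<exists>x. (v, x) \<in> ordV P p1 p2))"

definition acute_r :: "point set \<Rightarrow> point \<Rightarrow> point \<Rightarrow> point \<Rightarrow> point \<Rightarrow> bool" where
  "acute_r P p1 p2 u v \<longleftrightarrow> (\<exists>w. right_nb P p1 p2 v w \<and> acute u v w)"

definition acute_l :: "point set \<Rightarrow> point \<Rightarrow> point \<Rightarrow> point \<Rightarrow> point \<Rightarrow> bool" where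
  "acute_l P p1 p2 u v \<longleftrightarrow> (\<exists>w. left_nb P p1 p2 v w \<and> acute u v w)"

definition crossE :: "point set \<Rightarrow> (point \<times> point) set \<Rightarrow> point \<Rightarrow> point \<Rightarrow> (point \<times> point) set" where
  "crossE P E p1 p2 = {(u, v). u \<in> upperS P p1 p2 \<and> v \<in> lowerS P p1 p2 \<and> (u, v) \<in> E}"

text \<open>A valid split of E' into E1, E2: (u,v) goes to E1 if angle u v v^r is acute,
  otherwise to E2; if both angles are acute either choice is allowed.\<close>
definition valid_split ::
  "point set \<Rightarrow> (point \<times> point) set \<Rightarrow> point \<Rightarrow> point \<Rightarrow> (point \<times> point) set \<Rightarrow> (point \<times> point) set \<Rightarrow> bool" where
  "valid_split P E p1 p2 E1 E2 \<longleftrightarrow>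
     E1 \<union> E2 = crossE P E p1 p2 \<and> E1 \<inter> E2 = {} \<and>
     (\<forall>(u, v) \<in> E1. acute_r P p1 p2 u v) \<and>
     (\<forall>(u, v) \<in> E2. \<not> acute_r P p1 p2 u v \<or> acute_l P p1 p2 u v)"

definition graph1 :: "point set \<Rightarrow> point \<Rightarrow> point \<Rightarrow> (point \<times> point) set \<Rightarrow> point obgraph" where
  "graph1 P p1 p2 E1 = \<lparr>lside = upperS P p1 p2, rside = lowerS P p1 p2, edges = E1,
                        lord = ordU P p1 p2, rord = ordV P p1 p2\<rparr>"

definition graph2 :: "point set \<Rightarrow> point \<Rightarrow> point \<Rightarrow> (point \<times> point) set \<Rightarrow> point obgraph" where
  "graph2 P p1 p2 E2 = \<lparr>lside = upperS P p1 p2, rside = lowerS P p1 p2, edges = E2,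
                        lord = (ordU P p1 p2)\<inverse>, rord = (ordV P p1 p2)\<inverse>\<rparr>"

text \<open>Delete, for every right vertex v, the edge joining v to its neighbour of highest
  order on the left side: an edge (u,v) survives iff v has a neighbour of higher order than u.\<close>
definition delete_top :: "'a obgraph \<Rightarrow> 'a obgraph" where
  "delete_top G = G\<lparr>edges := {(u, v) \<in> edges G. \<exists>u'. (u', v) \<in> edges G \<and> (u, u') \<in> lord G}\<rparr>"

definition derived_class :: "(point set \<Rightarrow> (point \<times> point) set \<Rightarrow> bool) \<Rightarrow> point obgraph set" where
  "derived_class Q = {G. \<exists>P E p1 p2 E1 E2.
      convex_position P \<and> Q P E \<and> antipodal P p1 p2 \<and> valid_split P E p1 p2 E1 E2 \<and>
      (G = delete_top (graph1 P p1 p2 E1) \<or> G = delete_top (graph2 P p1 p2 E2))}"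

definition G_UDG :: "point obgraph set" where
  "G_UDG = derived_class is_UDG"

definition G_LGG :: "point obgraph set" where
  "G_LGG = derived_class is_LGG"

end

theory Submission
  imports Defs
begin

text \<open>Every unit distance graph is locally Gabriel: if \<open>|uv| = |uw| = 1\<close> then the angle at
  \<open>w\<close> in the triangle \<open>uvw\<close> is acute, so \<open>w\<close> lies outside the disk with diameter \<open>uv\<close>.
  Conversely, for points \<open>c < a\<close> in \<open>V\<close> and \<open>x < y\<close> in \<open>U\<close> the quadrilateral \<open>a c x y\<close> is
  convex, so its diagonals \<open>ax\<close>, \<open>cy\<close> are together longer than the sides \<open>cx\<close>, \<open>ya\<close>. Two such
  inequalities show that no \<open>G'_1\<close> or \<open>G'_2\<close> of a unit distance graph contains the ordered
  6-cycle \<open>u1 A u2 C u3 B\<close> with \<open>u1 < u2, u3\<close> and \<open>B < C < A\<close>, whereas an explicit 11-point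
  locally Gabriel configuration produces it.\<close>

lemma dotp_eq_inner: "dotp a b = a \<bullet> b"
  by (simp add: dotp_def inner_prod_def)

lemma cross_cramer: "cross x z *\<^sub>R y = cross y z *\<^sub>R x + cross x y *\<^sub>R z"
  by (simp add: cross_def prod_eq_iff algebra_simps)

lemma dotp_diff_eq_dist:
  "2 * dotp (u - w) (v - w) = (dist u w)\<^sup>2 + (dist v w)\<^sup>2 - (dist u v)\<^sup>2"
  unfolding dotp_eq_inner dist_norm power2_norm_eq_inner
  by (simp add: inner_diff_left inner_diff_right inner_commute)

lemma mem_cball_midpoint_iff:
  "w \<in> cball (midpoint u v) (dist u v / 2) \<longleftrightarrow> dotp (u - w) (v - w) \<le> 0"
proof -
  have "4 * (dist (midpoint u v) w)\<^sup>2 = (dist u v)\<^sup>2 + 4 * dotp (u - w) (v - w)"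
    unfolding dotp_eq_inner dist_norm power2_norm_eq_inner midpoint_def
    by (simp add: inner_add_left inner_add_right inner_commute algebra_simps)
  then have "dist (midpoint u v) w \<le> dist u v / 2 \<longleftrightarrow> dotp (u - w) (v - w) \<le> 0"
    using power_mono_iff[of "2 * dist (midpoint u v) w" "dist u v" 2] by auto
  then show ?thesis by (simp add: mem_cball)
qed

lemma is_UDG_imp_is_LGG:
  assumes "is_UDG P E"
  shows "is_LGG P E"
  unfolding is_LGG_def
proof
  show "geom_graph P E"
    using assms unfolding geom_graph_def is_UDG_def sym_def by (auto simp: dist_commute)
  show "\<forall>u v w. (u, v) \<in> E \<longrightarrow> ((u, w) \<in> E \<or> (v, w) \<in> E) \<longrightarrow> w \<noteq> u \<longrightarrow> w \<noteq> v \<longrightarrow>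
      w \<notin> cball (midpoint u v) (dist u v / 2)"
  proof (intro allI impI)
    fix u v w
    assume "(u, v) \<in> E" "(u, w) \<in> E \<or> (v, w) \<in> E" "w \<noteq> u" "w \<noteq> v"
    then have "dist u v = 1" "dist u w = 1 \<and> dist v w > 0 \<or> dist v w = 1 \<and> dist u w > 0"
      using assms by (auto simp: is_UDG_def)
    then have "2 * dotp (u - w) (v - w) > 0"
      unfolding dotp_diff_eq_dist by auto
    then show "w \<notin> cball (midpoint u v) (dist u v / 2)"
      using mem_cball_midpoint_iff[of w u v] by linarith
  qed
qed

lemma derived_class_mono:
  "(\<And>P E. Q P E \<Longrightarrow> Q' P E) \<Longrightarrow> derived_class Q \<subseteq> derived_class Q'"
  unfolding derived_class_def by blast

lemma G_UDG_subset_G_LGG: "G_UDG \<subseteq> G_LGG"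
  unfolding G_UDG_def G_LGG_def by (rule derived_class_mono) (rule is_UDG_imp_is_LGG)

lemma convex_position_not_in_hull:
  "convex_position P \<Longrightarrow> p \<in> P \<Longrightarrow> S \<subseteq> P - {p} \<Longrightarrow> p \<notin> convex hull S"
  unfolding convex_position_def using hull_mono by blast

lemma not_in_convex_hull_if_separated:
  assumes "\<forall>q\<in>S. a \<bullet> q \<le> b" and "a \<bullet> p > b"
  shows "p \<notin> convex hull S"
proof -
  have "convex hull S \<subseteq> {x. a \<bullet> x \<le> b}"
    using assms(1) by (intro hull_minimal) (auto simp: convex_halfspace_le)
  then show ?thesis
    using assms(2) by auto
qed

lemma mem_triangle_if_not_ccw:
  fixes p x y z :: point
  assumes xy: "cross (x - p) (y - p) > 0" and yz: "cross (y - p) (z - p) > 0"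
    and xz: "cross (x - p) (z - p) > 0" and not_ccw: "cross (y - x) (z - x) \<le> 0"
  shows "y \<in> convex hull {p, x, z}"
proof -
  define k a b where "k = cross (x - p) (z - p)"
    and "a = cross (y - p) (z - p) / k" and "b = cross (x - p) (y - p) / k"
  have "k > 0" "a > 0" "b > 0"
    using xy yz xz by (simp_all add: k_def a_def b_def)
  have ka: "k * a = cross (y - p) (z - p)" and kb: "k * b = cross (x - p) (y - p)"
    using \<open>k > 0\<close> by (simp_all add: a_def b_def)
  have "cross (y - x) (z - x) = k * a + k * b - k"
    unfolding ka kb by (simp add: k_def cross_def algebra_simps)
  with not_ccw have "k * (a + b) \<le> k * 1"
    by (simp add: distrib_left)
  then have "a + b \<le> 1"
    using \<open>k > 0\<close> by (simp add: mult_le_cancel_left_pos)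
  have "k *\<^sub>R (y - p) = (k * a) *\<^sub>R (x - p) + (k * b) *\<^sub>R (z - p)"
    unfolding ka kb unfolding k_def by (rule cross_cramer)
  then have "k *\<^sub>R (y - p) = k *\<^sub>R (a *\<^sub>R (x - p) + b *\<^sub>R (z - p))"
    by (simp add: scaleR_right_distrib)
  then have "y - p = a *\<^sub>R (x - p) + b *\<^sub>R (z - p)"
    using \<open>k > 0\<close> by simp
  then have "y = (1 - a - b) *\<^sub>R p + a *\<^sub>R x + b *\<^sub>R z"
    by (simp add: algebra_simps)
  then show ?thesis
    unfolding convex_hull_3 using \<open>a > 0\<close> \<open>b > 0\<close> \<open>a + b \<le> 1\<close> by force
qed

lemma convex_position_ccw:
  assumes cp: "convex_position P" and "p \<in> P" "x \<in> P" "y \<in> P" "z \<in> P"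
    and xy: "cross (x - p) (y - p) > 0" and yz: "cross (y - p) (z - p) > 0"
    and xz: "cross (x - p) (z - p) > 0"
  shows "cross (y - x) (z - x) > 0"
proof (rule ccontr)
  assume "\<not> ?thesis"
  then have "y \<in> convex hull {p, x, z}"
    using mem_triangle_if_not_ccw xy yz xz by simp
  moreover have "{p, x, z} \<subseteq> P - {y}"
    using assms xy yz by (auto simp: cross_def)
  ultimately show False
    using convex_position_not_in_hull cp \<open>y \<in> P\<close> by blast
qed

lemma eq_0_if_orthogonal_to_independent:
  fixes n d b :: point
  assumes "dotp n d = 0" "dotp n b = 0" "cross d b \<noteq> 0"
  shows "n = 0"
proof -
  have "cross d b * fst n = snd b * dotp n d - snd d * dotp n b"
    "cross d b * snd n = fst d * dotp n b - fst b * dotp n d"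
    by (simp_all add: cross_def dotp_def algebra_simps)
  then show ?thesis
    using assms by (simp add: prod_eq_iff)
qed

lemma cross_nonneg_in_strip:
  fixes n p1 p2 u v :: point
  assumes "n \<noteq> 0" and "dotp n p1 \<le> dotp n v" "dotp n p1 \<le> dotp n u" "dotp n u \<le> dotp n p2"
    and u: "cross (p2 - p1) (u - p1) > 0" and v: "cross (p2 - p1) (v - p1) < 0"
  shows "cross (v - p1) (u - p1) \<ge> 0"
proof -
  have lin: "dotp n (q - p1) = dotp n q - dotp n p1" for q
    by (simp add: dotp_def algebra_simps)
  have "dotp n (p2 - p1) > 0"
  proof (rule ccontr)
    assume "\<not> ?thesis"
    then have "dotp n (p2 - p1) = 0" "dotp n (u - p1) = 0"
      using assms(3,4) by (auto simp: lin)
    then show False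
      using eq_0_if_orthogonal_to_independent[of n "p2 - p1" "u - p1"] u \<open>n \<noteq> 0\<close> by simp
  qed
  \<comment> \<open>\<open>cross_cramer\<close> paired with \<open>n\<close>\<close>
  moreover have "cross (v - p1) (u - p1) * dotp n (p2 - p1)
      = cross (p2 - p1) (u - p1) * dotp n (v - p1) - cross (p2 - p1) (v - p1) * dotp n (u - p1)"
    by (simp add: cross_def dotp_def algebra_simps)
  moreover have "cross (p2 - p1) (u - p1) * dotp n (v - p1) \<ge> 0"
    "cross (p2 - p1) (v - p1) * dotp n (u - p1) \<le> 0"
    using assms by (simp_all add: lin mult_nonpos_nonneg)
  ultimately show ?thesis
    by (smt (verit) zero_le_mult_iff)
qed

lemma mem_segment_if_cross_eq_0:
  fixes p1 p2 u v :: point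
  assumes u: "cross (p2 - p1) (u - p1) > 0" and v: "cross (p2 - p1) (v - p1) < 0"
    and "cross (v - p1) (u - p1) = 0"
  shows "p1 \<in> convex hull {v, u}"
proof -
  define a b where "a = cross (p2 - p1) (u - p1)" and "b = cross (v - p1) (p2 - p1)"
  have "a > 0" "b > 0" using u v by (simp_all add: a_def b_def cross_def algebra_simps)
  have "a *\<^sub>R (v - p1) + b *\<^sub>R (u - p1) = 0"
    using cross_cramer[of "v - p1" "u - p1" "p2 - p1"] assms(3) by (simp add: a_def b_def)
  then have "(a + b) *\<^sub>R p1 = a *\<^sub>R v + b *\<^sub>R u"
    by (simp add: algebra_simps)
  then have "(a + b) *\<^sub>R p1 = (a + b) *\<^sub>R ((a / (a + b)) *\<^sub>R v + (b / (a + b)) *\<^sub>R u)"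
    using \<open>a > 0\<close> \<open>b > 0\<close> by (simp add: scaleR_right_distrib)
  then have "p1 = (a / (a + b)) *\<^sub>R v + (b / (a + b)) *\<^sub>R u"
    using \<open>a > 0\<close> \<open>b > 0\<close> by simp
  then show ?thesis
    unfolding convex_hull_2 using \<open>a > 0\<close> \<open>b > 0\<close> by (force simp: add_divide_distrib[symmetric])
qed

lemma antipodal_lower_upper_ccw:
  assumes cp: "convex_position P" and ap: "antipodal P p1 p2"
    and v: "v \<in> lowerS P p1 p2" and u: "u \<in> upperS P p1 p2"
  shows "cross (v - p1) (u - p1) > 0"
proof -
  obtain n where "n \<noteq> 0" and strip: "\<forall>q\<in>P. dotp n p1 \<le> dotp n q \<and> dotp n q \<le> dotp n p2"
    using ap unfolding antipodal_def by blast
  have "p1 \<in> P" "u \<in> P" "v \<in> P"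
    using ap u v by (auto simp: antipodal_def upperS_def lowerS_def)
  have u_side: "cross (p2 - p1) (u - p1) > 0" and v_side: "cross (p2 - p1) (v - p1) < 0"
    using u v by (auto simp: upperS_def lowerS_def)
  have "cross (v - p1) (u - p1) \<ge> 0"
    using cross_nonneg_in_strip[OF \<open>n \<noteq> 0\<close> _ _ _ u_side v_side] strip \<open>u \<in> P\<close> \<open>v \<in> P\<close> by blast
  moreover have "cross (v - p1) (u - p1) \<noteq> 0"
  proof
    assume "cross (v - p1) (u - p1) = 0"
    then have "p1 \<in> convex hull {v, u}"
      by (rule mem_segment_if_cross_eq_0[OF u_side v_side])
    moreover have "{v, u} \<subseteq> P - {p1}"
      using \<open>u \<in> P\<close> \<open>v \<in> P\<close> u_side v_side by (auto simp: cross_def)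
    ultimately show False
      using convex_position_not_in_hull cp \<open>p1 \<in> P\<close> by blast
  qed
  ultimately show ?thesis by simp
qed

lemma dist_less_if_cross_neq_0:
  fixes p q r :: point
  assumes "cross (q - p) (r - q) \<noteq> 0"
  shows "dist p r < dist p q + dist q r"
proof -
  have "q \<notin> closed_segment p r"
  proof
    assume "q \<in> closed_segment p r"
    then obtain t where q: "q = (1 - t) *\<^sub>R p + t *\<^sub>R r"
      unfolding closed_segment_def by blast
    have "cross (q - p) (r - q) = 0"
      unfolding q by (simp add: cross_def algebra_simps)
    with assms show False ..
  qed
  then have "dist p r \<noteq> dist p q + dist q r"
    using between between_mem_segment by metis
  then show ?thesis
    using dist_triangle[of p r q] by linarith
qed

lemma convex_quadrilateral_sides_less_diagonals:
  fixes P Q R S :: point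
  assumes PQR: "cross (Q - P) (R - P) > 0" and PRS: "cross (R - P) (S - P) > 0"
    and QRS: "cross (R - Q) (S - Q) > 0" and QSP: "cross (S - Q) (P - Q) > 0"
  shows "dist Q R + dist S P < dist P R + dist Q S"
proof -
  define D where "D = cross (Q - P) (R - P) + cross (R - P) (S - P)"
  \<comment> \<open>ratios of triangle areas locating the crossing point \<open>X\<close> of the diagonals on \<open>PR\<close> and \<open>QS\<close>\<close>
  define t s where "t = cross (S - Q) (P - Q) / D" and "s = cross (Q - P) (R - P) / D"
  define X where "X = (1 - t) *\<^sub>R P + t *\<^sub>R R"
  have "D > 0" using PQR PRS by (simp add: D_def)
  have D_alt: "D = cross (R - Q) (S - Q) + cross (S - Q) (P - Q)"
    by (simp add: D_def cross_def algebra_simps)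
  have "0 \<le> t" "t \<le> 1"
    unfolding t_def using QRS QSP D_alt by simp_all
  have "0 < s" "s \<le> 1"
    unfolding s_def using PQR PRS D_def by simp_all
  have X_QS: "X = (1 - s) *\<^sub>R Q + s *\<^sub>R S"
    using \<open>D > 0\<close>
    by (simp add: X_def t_def s_def D_def cross_def prod_eq_iff field_simps)
  have "X \<in> closed_segment P R"
    using \<open>0 \<le> t\<close> \<open>t \<le> 1\<close> unfolding X_def closed_segment_def by blast
  moreover have "X \<in> closed_segment Q S"
    using \<open>0 < s\<close> \<open>s \<le> 1\<close> unfolding X_QS closed_segment_def by force
  ultimately have PR: "dist P R = dist P X + dist X R" and QS: "dist Q S = dist Q X + dist X S"
    using between between_mem_segment by metis+
  have "cross (X - Q) (R - X) = - s * cross (R - Q) (S - Q)"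
    by (simp add: X_QS cross_def algebra_simps)
  then have "dist Q R < dist Q X + dist X R"
    using \<open>0 < s\<close> QRS by (intro dist_less_if_cross_neq_0) simp
  moreover have "dist S P \<le> dist S X + dist X P"
    by (rule dist_triangle)
  ultimately show ?thesis
    using PR QS by (simp add: dist_commute)
qed

lemma antipodal_quadrilateral_dist_less:
  assumes cp: "convex_position P" and ap: "antipodal P p1 p2"
    and a: "a \<in> lowerS P p1 p2" and c: "c \<in> lowerS P p1 p2" and ca: "(c, a) \<in> ordV P p1 p2"
    and x: "x \<in> upperS P p1 p2" and y: "y \<in> upperS P p1 p2" and xy: "(x, y) \<in> ordU P p1 p2"
  shows "dist c x + dist y a < dist a x + dist c y"
proof -
  have "p1 \<in> P" using ap by (simp add: antipodal_def)
  have P: "a \<in> P" "c \<in> P" "x \<in> P" "y \<in> P"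
    using a c x y by (auto simp: lowerS_def upperS_def)
  have "cross (a - p1) (c - p1) = - cross (c - p1) (a - p1)"
    by (simp add: cross_def)
  then have ac: "cross (a - p1) (c - p1) > 0"
    using ca by (simp add: ordV_def)
  have xy': "cross (x - p1) (y - p1) > 0"
    using xy by (simp add: ordU_def)
  have ax: "cross (a - p1) (x - p1) > 0" and ay: "cross (a - p1) (y - p1) > 0"
    and cx: "cross (c - p1) (x - p1) > 0" and cy: "cross (c - p1) (y - p1) > 0"
    using antipodal_lower_upper_ccw[OF cp ap] a c x y by auto
  have acx: "cross (c - a) (x - a) > 0" and axy: "cross (x - a) (y - a) > 0"
    and cxy: "cross (x - c) (y - c) > 0" and acy: "cross (c - a) (y - a) > 0"
    using convex_position_ccw[OF cp \<open>p1 \<in> P\<close>] P ac ax ay cx cy xy' by blast+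
  have "cross (y - c) (a - c) = cross (c - a) (y - a)"
    by (simp add: cross_def algebra_simps)
  with acy have cya: "cross (y - c) (a - c) > 0"
    by simp
  show ?thesis
    by (rule convex_quadrilateral_sides_less_diagonals[OF acx axy cxy cya])
qed

definition hexagon_pattern :: "'a obgraph \<Rightarrow> 'a \<Rightarrow> 'a \<Rightarrow> 'a \<Rightarrow> 'a \<Rightarrow> 'a \<Rightarrow> 'a \<Rightarrow> bool" where
  "hexagon_pattern G u1 u2 u3 A B C \<longleftrightarrow>
     {u1, u2, u3} \<subseteq> lside G \<and> {A, B, C} \<subseteq> rside G \<and>
     (u1, u2) \<in> lord G \<and> (u1, u3) \<in> lord G \<and> (C, A) \<in> rord G \<and> (B, C) \<in> rord G \<and>
     {(u1, A), (u2, A), (u2, C), (u3, C), (u3, B), (u1, B)} \<subseteq> edges G"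

lemma hexagon_pattern_obg_iso:
  assumes "obg_iso G H" and "hexagon_pattern G u1 u2 u3 A B C"
  shows "\<exists>u1' u2' u3' A' B' C'. hexagon_pattern H u1' u2' u3' A' B' C'"
proof -
  obtain f g where "bij_betw f (lside G) (lside H)" "bij_betw g (rside G) (rside H)"
    and "\<forall>a\<in>lside G. \<forall>b\<in>lside G. (a, b) \<in> lord G \<longleftrightarrow> (f a, f b) \<in> lord H"
    and "\<forall>a\<in>rside G. \<forall>b\<in>rside G. (a, b) \<in> rord G \<longleftrightarrow> (g a, g b) \<in> rord H"
    and "\<forall>a\<in>lside G. \<forall>b\<in>rside G. (a, b) \<in> edges G \<longleftrightarrow> (f a, g b) \<in> edges H"
    using assms(1) unfolding obg_iso_def by blast
  then have "hexagon_pattern H (f u1) (f u2) (f u3) (g A) (g B) (g C)"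
    using assms(2) unfolding hexagon_pattern_def bij_betw_def by auto
  then show ?thesis by blast
qed

lemma G_UDG_no_hexagon_pattern:
  assumes "H \<in> G_UDG"
  shows "\<not> hexagon_pattern H u1 u2 u3 A B C"
proof
  assume pat: "hexagon_pattern H u1 u2 u3 A B C"
  obtain P E p1 p2 E1 E2 where cp: "convex_position P" and udg: "is_UDG P E"
    and ap: "antipodal P p1 p2" and split: "valid_split P E p1 p2 E1 E2"
    and H: "H = delete_top (graph1 P p1 p2 E1) \<or> H = delete_top (graph2 P p1 p2 E2)"
    using assms unfolding G_UDG_def derived_class_def by blast
  have "edges H \<subseteq> crossE P E p1 p2"
    using H split by (auto simp: delete_top_def graph1_def graph2_def valid_split_def)
  then have unit: "dist u v = 1" if "(u, v) \<in> edges H" for u v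
    using that udg by (auto simp: crossE_def is_UDG_def)
  have sides: "lside H = upperS P p1 p2" "rside H = lowerS P p1 p2"
    using H by (auto simp: delete_top_def graph1_def graph2_def)
  then have U: "u1 \<in> upperS P p1 p2" "u2 \<in> upperS P p1 p2" "u3 \<in> upperS P p1 p2"
    and V: "A \<in> lowerS P p1 p2" "B \<in> lowerS P p1 p2" "C \<in> lowerS P p1 p2"
    using pat by (auto simp: hexagon_pattern_def)
  have d: "dist u1 A = 1" "dist u2 A = 1" "dist u2 C = 1"
    "dist u3 C = 1" "dist u3 B = 1" "dist u1 B = 1"
    using pat unit by (auto simp: hexagon_pattern_def)
  note quad = antipodal_quadrilateral_dist_less[OF cp ap]
  from H show False
  proof
    assume "H = delete_top (graph1 P p1 p2 E1)"
    then have "(u1, u2) \<in> ordU P p1 p2" "(u1, u3) \<in> ordU P p1 p2"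
      "(C, A) \<in> ordV P p1 p2" "(B, C) \<in> ordV P p1 p2"
      using pat by (auto simp: hexagon_pattern_def delete_top_def graph1_def)
    then have "dist C u1 + dist u2 A < dist A u1 + dist C u2"
      and "dist B u1 + dist u3 C < dist C u1 + dist B u3"
      using quad U V by blast+
    then show False
      using d by (simp add: dist_commute)
  next
    assume "H = delete_top (graph2 P p1 p2 E2)"
    then have "(u2, u1) \<in> ordU P p1 p2" "(u3, u1) \<in> ordU P p1 p2"
      "(A, C) \<in> ordV P p1 p2" "(C, B) \<in> ordV P p1 p2"
      using pat by (auto simp: hexagon_pattern_def delete_top_def graph2_def)
    then have "dist A u2 + dist u1 C < dist C u2 + dist A u1"
      and "dist C u3 + dist u1 B < dist B u3 + dist C u1"
      using quad U V by blast+
    then show False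
      using d by (simp add: dist_commute)
  qed
qed

definition ex_p1 :: point where "ex_p1 = (-40, 0)"
definition ex_p2 :: point where "ex_p2 = (40, 0)"
definition ex_A :: point where "ex_A = (-29, -9)"
definition ex_B :: point where "ex_B = (35, -22)"
definition ex_C :: point where "ex_C = (16, -39)"
definition ex_u1 :: point where "ex_u1 = (38, 30)"
definition ex_u2 :: point where "ex_u2 = (32, 38)"
definition ex_u3 :: point where "ex_u3 = (-17, 29)"
definition ex_tA :: point where "ex_tA = (26, 45)"
definition ex_tB :: point where "ex_tB = (-38, 6)"
definition ex_tC :: point where "ex_tC = (-30, 21)"

lemmas ex_coords = ex_p1_def ex_p2_def ex_A_def ex_B_def ex_C_def
  ex_u1_def ex_u2_def ex_u3_def ex_tA_def ex_tB_def ex_tC_def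

definition ex_points :: "point set" where
  "ex_points = {ex_p1, ex_p2, ex_A, ex_B, ex_C, ex_u1, ex_u2, ex_u3, ex_tA, ex_tB, ex_tC}"

text \<open>Besides the hexagon \<open>u1 A u2 C u3 B\<close>, each of \<open>A, B, C\<close> is joined to a point
  \<open>tA, tB, tC\<close> above all its other neighbours; these are exactly the edges removed by
  \<open>delete_top\<close>.\<close>
definition ex_cross_edges :: "(point \<times> point) set" where
  "ex_cross_edges = {(ex_u1, ex_A), (ex_u2, ex_A), (ex_u2, ex_C), (ex_u3, ex_C), (ex_u3, ex_B),
     (ex_u1, ex_B), (ex_tA, ex_A), (ex_tB, ex_B), (ex_tC, ex_C)}"

definition ex_graph :: "(point \<times> point) set" where
  "ex_graph = ex_cross_edges \<union> ex_cross_edges\<inverse>"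

lemma upperS_ex: "upperS ex_points ex_p1 ex_p2 = {ex_u1, ex_u2, ex_u3, ex_tA, ex_tB, ex_tC}"
  unfolding upperS_def ex_points_def by (auto simp: ex_coords cross_def)

lemma lowerS_ex: "lowerS ex_points ex_p1 ex_p2 = {ex_A, ex_B, ex_C}"
  unfolding lowerS_def ex_points_def by (auto simp: ex_coords cross_def)

lemma ordV_ex: "ordV ex_points ex_p1 ex_p2 = {(ex_B, ex_C), (ex_B, ex_A), (ex_C, ex_A)}"
  unfolding ordV_def lowerS_ex by (auto simp: ex_coords cross_def)

lemma crossE_ex: "crossE ex_points ex_graph ex_p1 ex_p2 = ex_cross_edges"
proof -
  have "ex_cross_edges \<subseteq> upperS ex_points ex_p1 ex_p2 \<times> lowerS ex_points ex_p1 ex_p2"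
    unfolding upperS_ex lowerS_ex ex_cross_edges_def by auto
  moreover have "upperS ex_points ex_p1 ex_p2 \<inter> lowerS ex_points ex_p1 ex_p2 = {}"
    by (auto simp: upperS_def lowerS_def)
  ultimately show ?thesis
    unfolding crossE_def ex_graph_def by blast
qed

lemma convex_position_ex: "convex_position ex_points"
proof -
  have sep: "p \<notin> convex hull (ex_points - {p})"
    if "\<forall>q\<in>ex_points. q \<noteq> p \<longrightarrow> a \<bullet> q \<le> b" "a \<bullet> p > b" for p a b
    using that by (intro not_in_convex_hull_if_separated) auto
  note coords = ex_points_def ex_coords inner_prod_def
  have "ex_p1 \<notin> convex hull (ex_points - {ex_p1})"
    by (rule sep[of _ "(-15, -9)" 516]) (simp_all add: coords)
  moreover have "ex_A \<notin> convex hull (ex_points - {ex_A})"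
    by (rule sep[of _ "(-39, -56)" 1560]) (simp_all add: coords)
  moreover have "ex_C \<notin> convex hull (ex_points - {ex_C})"
    by (rule sep[of _ "(-13, -64)" 953]) (simp_all add: coords)
  moreover have "ex_B \<notin> convex hull (ex_points - {ex_B})"
    by (rule sep[of _ "(39, -24)" 1560]) (simp_all add: coords)
  moreover have "ex_p2 \<notin> convex hull (ex_points - {ex_p2})"
    by (rule sep[of _ "(52, -3)" 1886]) (simp_all add: coords)
  moreover have "ex_u1 \<notin> convex hull (ex_points - {ex_u1})"
    by (rule sep[of _ "(38, 8)" 1520]) (simp_all add: coords)
  moreover have "ex_u2 \<notin> convex hull (ex_points - {ex_u2})"
    by (rule sep[of _ "(15, 12)" 930]) (simp_all add: coords)
  moreover have "ex_tA \<notin> convex hull (ex_points - {ex_tA})"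
    by (rule sep[of _ "(-9, 49)" 1574]) (simp_all add: coords)
  moreover have "ex_u3 \<notin> convex hull (ex_points - {ex_u3})"
    by (rule sep[of _ "(-24, 56)" 1896]) (simp_all add: coords)
  moreover have "ex_tC \<notin> convex hull (ex_points - {ex_tC})"
    by (rule sep[of _ "(-23, 21)" 1000]) (simp_all add: coords)
  moreover have "ex_tB \<notin> convex hull (ex_points - {ex_tB})"
    by (rule sep[of _ "(-21, 10)" 840]) (simp_all add: coords)
  ultimately show ?thesis
    unfolding convex_position_def ex_points_def by auto
qed

lemma is_LGG_ex: "is_LGG ex_points ex_graph"
  unfolding is_LGG_def
proof
  have "ex_cross_edges \<subseteq> ex_points \<times> ex_points" "\<forall>p. (p, p) \<notin> ex_cross_edges"
    unfolding ex_cross_edges_def ex_points_def by (auto simp: ex_coords)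
  then show "geom_graph ex_points ex_graph"
    unfolding geom_graph_def ex_graph_def sym_def by auto
  have acute: "\<forall>e\<in>ex_cross_edges. \<forall>w\<in>ex_points.
      ((fst e, w) \<in> ex_graph \<or> (snd e, w) \<in> ex_graph) \<longrightarrow> w \<noteq> fst e \<longrightarrow> w \<noteq> snd e \<longrightarrow> dotp (fst e - w) (snd e - w) > 0"
    unfolding ex_graph_def ex_cross_edges_def ex_points_def by (simp add: ex_coords dotp_def)
  show "\<forall>u v w. (u, v) \<in> ex_graph \<longrightarrow> ((u, w) \<in> ex_graph \<or> (v, w) \<in> ex_graph) \<longrightarrow>
      w \<noteq> u \<longrightarrow> w \<noteq> v \<longrightarrow> w \<notin> cball (midpoint u v) (dist u v / 2)"
  proof (intro allI impI)
    fix u v w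
    assume uv: "(u, v) \<in> ex_graph"
      and w: "(u, w) \<in> ex_graph \<or> (v, w) \<in> ex_graph" "w \<noteq> u" "w \<noteq> v"
    have "w \<in> ex_points"
      using w(1) \<open>ex_cross_edges \<subseteq> ex_points \<times> ex_points\<close> by (auto simp: ex_graph_def)
    moreover have "dotp (u - w) (v - w) = dotp (v - w) (u - w)"
      by (simp add: dotp_def mult.commute)
    moreover have "(u, v) \<in> ex_cross_edges \<or> (v, u) \<in> ex_cross_edges"
      using uv by (auto simp: ex_graph_def)
    ultimately have "dotp (u - w) (v - w) > 0"
      using w acute by fastforce
    then show "w \<notin> cball (midpoint u v) (dist u v / 2)"
      unfolding mem_cball_midpoint_iff by simp
  qed
qed

lemma antipodal_ex: "antipodal ex_points ex_p1 ex_p2"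
  unfolding antipodal_def
proof (intro conjI exI)
  show "(1, 0) \<noteq> (0 :: point)"
    by (simp add: zero_prod_def)
  show "\<forall>q\<in>ex_points. dotp (1, 0) ex_p1 \<le> dotp (1, 0) q \<and> dotp (1, 0) q \<le> dotp (1, 0) ex_p2"
    by (simp add: ex_points_def ex_coords dotp_def)
qed (simp_all add: ex_points_def ex_coords)

lemma valid_split_ex: "valid_split ex_points ex_graph ex_p1 ex_p2 ex_cross_edges {}"
proof -
  have right: "right_nb ex_points ex_p1 ex_p2 ex_A ex_C" "right_nb ex_points ex_p1 ex_p2 ex_C ex_B"
    "right_nb ex_points ex_p1 ex_p2 ex_B ex_p2"
    unfolding right_nb_def lowerS_ex ordV_ex by (auto simp: ex_coords)
  have acute_r: "acute_r ex_points ex_p1 ex_p2 u v"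
    if "right_nb ex_points ex_p1 ex_p2 v w" "acute u v w" for u v w
    using that unfolding acute_r_def by blast
  have "\<forall>(u, v)\<in>ex_cross_edges. acute_r ex_points ex_p1 ex_p2 u v"
    unfolding ex_cross_edges_def
    by (simp, intro conjI; rule acute_r[OF right(1)] acute_r[OF right(2)] acute_r[OF right(3)];
        simp add: acute_def dotp_def ex_coords)
  then show ?thesis
    unfolding valid_split_def crossE_ex by simp
qed

definition ex_obgraph :: "point obgraph" where
  "ex_obgraph = delete_top (graph1 ex_points ex_p1 ex_p2 ex_cross_edges)"

lemma ex_obgraph_in_G_LGG: "ex_obgraph \<in> G_LGG"
  unfolding G_LGG_def derived_class_def ex_obgraph_def
  using convex_position_ex is_LGG_ex antipodal_ex valid_split_ex by blast

lemma hexagon_pattern_ex_obgraph: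
  "hexagon_pattern ex_obgraph ex_u1 ex_u2 ex_u3 ex_A ex_B ex_C"
proof -
  have parts: "lside ex_obgraph = {ex_u1, ex_u2, ex_u3, ex_tA, ex_tB, ex_tC}"
    "rside ex_obgraph = {ex_A, ex_B, ex_C}" "lord ex_obgraph = ordU ex_points ex_p1 ex_p2"
    "rord ex_obgraph = {(ex_B, ex_C), (ex_B, ex_A), (ex_C, ex_A)}"
    by (simp_all add: ex_obgraph_def delete_top_def graph1_def upperS_ex lowerS_ex ordV_ex)
  have kept: "(u, v) \<in> edges ex_obgraph"
    if "(u, v) \<in> ex_cross_edges" "(t, v) \<in> ex_cross_edges" "(u, t) \<in> ordU ex_points ex_p1 ex_p2"
    for u v t
    using that unfolding ex_obgraph_def delete_top_def graph1_def by auto (metis prod.collapse)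
  have top: "(ex_u1, ex_tA) \<in> ordU ex_points ex_p1 ex_p2" "(ex_u2, ex_tA) \<in> ordU ex_points ex_p1 ex_p2"
    "(ex_u2, ex_tC) \<in> ordU ex_points ex_p1 ex_p2" "(ex_u3, ex_tC) \<in> ordU ex_points ex_p1 ex_p2"
    "(ex_u3, ex_tB) \<in> ordU ex_points ex_p1 ex_p2" "(ex_u1, ex_tB) \<in> ordU ex_points ex_p1 ex_p2"
    unfolding ordU_def upperS_ex by (simp_all add: ex_coords cross_def)
  have "{(ex_u1, ex_A), (ex_u2, ex_A), (ex_u2, ex_C), (ex_u3, ex_C), (ex_u3, ex_B), (ex_u1, ex_B)}
      \<subseteq> edges ex_obgraph"
    using kept[OF _ _ top(1)] kept[OF _ _ top(2)] kept[OF _ _ top(3)] kept[OF _ _ top(4)]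
      kept[OF _ _ top(5)] kept[OF _ _ top(6)]
    by (simp add: ex_cross_edges_def)
  moreover have "(ex_u1, ex_u2) \<in> ordU ex_points ex_p1 ex_p2"
    "(ex_u1, ex_u3) \<in> ordU ex_points ex_p1 ex_p2"
    unfolding ordU_def upperS_ex by (simp_all add: ex_coords cross_def)
  ultimately show ?thesis
    unfolding hexagon_pattern_def parts by simp
qed

theorem lemma9:
  shows "G_UDG \<subseteq> G_LGG \<and> (\<exists>G \<in> G_LGG. \<forall>H \<in> G_UDG. \<not> obg_iso G H)"
proof
  show "G_UDG \<subseteq> G_LGG"
    by (rule G_UDG_subset_G_LGG)
  show "\<exists>G \<in> G_LGG. \<forall>H \<in> G_UDG. \<not> obg_iso G H"
  proof (intro bexI ballI notI)
    fix H
    assume "H \<in> G_UDG" "obg_iso ex_obgraph H"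
    then show False
      using hexagon_pattern_obg_iso[OF _ hexagon_pattern_ex_obgraph] G_UDG_no_hexagon_pattern by blast
  qed (rule ex_obgraph_in_G_LGG)
qed

end
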